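(* For every reachable pointed lasso automaton $X=(X_1,X_2,\overline{x},\delta_1,\delta_2,\delta_3)$, define $T(X)=(\sim_\delta,\sim)$ as in the context. Then $\sim$ is a well-defined equivalence relation on $\Sigma^{\mathrm{up}}$, $(\sim_\delta,\sim)$ is a congruence on the free Wilke algebra $(\Sigma^+,\Sigma^{\mathrm{up}})$, and whenever there is a morphism $X\to Y$ of reachable pointed lasso automata, $T(X)\subseteq T(Y)$ componentwise. (That is, $T$ is a well-defined functor from $\mathrm{Alg}_r(G_1)$ to the preorder of Wilke algebra congruences under inclusion.)
   Context: $\Sigma$ is a finite alphabet, $\Sigma^+$ the nonempty words, $\Sigma^{\ast+}=\Sigma^\ast\times\Sigma^+$ the lassos, $\Sigma^{\mathrm{up}}=\{uv^\omega\mid u\in\Sigma^\ast,v\in\Sigma^+\}$ the ultimately periodic words; $(u,v)\sim_\gamma(u',v')$ iff $uv^\omega=u'v'^\omega$. A pointed lasso automaton is $(X_1,X_2,\overline{x},\delta_1,\delta_2,\delta_3)$ with disjoint $X_1,X_2$, $\overline{x}\in X_1$, $\delta_1:X_1\times\Sigma\to X_1$, $\delta_2:X_1\times\Sigma\to X_2$, $\delta_3:X_2\times\Sigma\to X_2$; extend $\delta_1,\delta_3$ to words, $\delta_\circ(x,av)=\delta_3(\delta_2(x,a),v)$ for $x\in X_1$, $\delta(x,(u,v))=\delta_\circ(\delta_1(x,u),v)$. It is reachable if every $x\in X_1$ is $\delta_1(\overline{x},w)$ for some word and every $y\in X_2$ is $\delta(\overline{x},(u,v))$ for some lasso; morphisms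 are pairs of maps preserving the initial state and commuting with $\delta_1,\delta_2,\delta_3$; $\mathrm{Alg}_r(G_1)$ is the resulting category. A set $c\subseteq X_2$ is admissible if the accepted lasso language $\{(u,v)\mid\delta(\overline{x},(u,v))\in c\}$ is closed under $\sim_\gamma$; $\mathrm{Adm}(X_2)$ is the set of admissible sets. $\sim_\delta\subseteq\Sigma^+\times\Sigma^+$: $u\sim_\delta v$ iff $\delta_1(x,u)=\delta_1(x,v)$ and $\delta_\circ(x,u)=\delta_\circ(x,v)$ for all $x\in X_1$, and $\delta_3(y,u)=\delta_3(y,v)$ for all $y\in X_2$. $\sim$ on $\Sigma^{\mathrm{up}}$: $uv^\omega\sim u'v'^\omega$ iff for all $x\in X_1$ and $c\in\mathrm{Adm}(X_2)$, $\delta(x,(u,v))\in c\iff\delta(x,(u',v'))\in c$. The free Wilke algebra over $\Sigma$ is $(\Sigma^+,\Sigma^{\mathrm{up}})$ with concatenation on $\Sigma^+$, mixed product $u\cdot(vw^\omega)=(uv)w^\omega$ and $\omega$-power $u\mapsto u^\omega$; a congruence on it is a pair of equivalence relations on $\Sigma^+$ and $\Sigma^{\mathrm{up}}$ compatible with these three operations. *)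

theory Defs
  imports Main
begin

text \<open>Finite words are lists; infinite words are functions nat => 'a.
  A lasso is a pair (u,v) with v nonempty.\<close>

definition lasso :: "'a list \<times> 'a list \<Rightarrow> bool" where
  "lasso p \<longleftrightarrow> snd p \<noteq> []"

definition omega_of :: "'a list \<times> 'a list \<Rightarrow> (nat \<Rightarrow> 'a)" where
  "omega_of p = (\<lambda>i. if i < length (fst p) then fst p ! i
                      else snd p ! ((i - length (fst p)) mod length (snd p)))"

definition sim_gamma :: "'a list \<times> 'a list \<Rightarrow> 'a list \<times> 'a list \<Rightarrow> bool" where
  "sim_gamma p q \<longleftrightarrow> omega_of p = omega_of q"

definition nonempty_words :: "'a list set" where
  "nonempty_words = {w. w \<noteq> []}"

definition up_words :: "(nat \<Rightarrow> 'a) set" where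
  "up_words = {omega_of p | p. lasso p}"

definition mixed_prod :: "'a list \<Rightarrow> (nat \<Rightarrow> 'a) \<Rightarrow> (nat \<Rightarrow> 'a)" where
  "mixed_prod u \<alpha> = (\<lambda>i. if i < length u then u ! i else \<alpha> (i - length u))"

definition omega_pow :: "'a list \<Rightarrow> (nat \<Rightarrow> 'a)" where
  "omega_pow u = omega_of ([], u)"

definition wilke_congruence :: "('a list \<times> 'a list) set \<Rightarrow> ((nat \<Rightarrow> 'a) \<times> (nat \<Rightarrow> 'a)) set \<Rightarrow> bool" where
  "wilke_congruence Ep Eu \<longleftrightarrow>
     equiv nonempty_words Ep \<and> equiv up_words Eu \<and>
     (\<forall>u u' v v'. (u, u') \<in> Ep \<and> (v, v') \<in> Ep \<longrightarrow> (u @ v, u' @ v') \<in> Ep) \<and>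
     (\<forall>u u' \<alpha> \<alpha>'. (u, u') \<in> Ep \<and> (\<alpha>, \<alpha>') \<in> Eu \<longrightarrow> (mixed_prod u \<alpha>, mixed_prod u' \<alpha>') \<in> Eu) \<and>
     (\<forall>u u'. (u, u') \<in> Ep \<longrightarrow> (omega_pow u, omega_pow u') \<in> Eu)"

text \<open>X1 and X2 live in distinct types, hence are disjoint.\<close>
record ('x, 'y, 'a) lasso_aut =
  X1 :: "'x set"
  X2 :: "'y set"
  init :: 'x
  d1 :: "'x \<Rightarrow> 'a \<Rightarrow> 'x"
  d2 :: "'x \<Rightarrow> 'a \<Rightarrow> 'y"
  d3 :: "'y \<Rightarrow> 'a \<Rightarrow> 'y"

definition is_lasso_aut :: "('x, 'y, 'a) lasso_aut \<Rightarrow> bool" where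
  "is_lasso_aut A \<longleftrightarrow> init A \<in> X1 A \<and>
     (\<forall>x\<in>X1 A. \<forall>a. d1 A x a \<in> X1 A) \<and>
     (\<forall>x\<in>X1 A. \<forall>a. d2 A x a \<in> X2 A) \<and>
     (\<forall>y\<in>X2 A. \<forall>a. d3 A y a \<in> X2 A)"

definition d1w :: "('x, 'y, 'a) lasso_aut \<Rightarrow> 'x \<Rightarrow> 'a list \<Rightarrow> 'x" where
  "d1w A x u = foldl (d1 A) x u"

definition d3w :: "('x, 'y, 'a) lasso_aut \<Rightarrow> 'y \<Rightarrow> 'a list \<Rightarrow> 'y" where
  "d3w A y u = foldl (d3 A) y u"

text \<open>delta_circ(x, a v) = delta3(delta2(x,a), v); only used on nonempty words.\<close>
definition dcirc :: "('x, 'y, 'a) lasso_aut \<Rightarrow> 'x \<Rightarrow> 'a list \<Rightarrow> 'y" where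
  "dcirc A x w = d3w A (d2 A x (hd w)) (tl w)"

definition delta :: "('x, 'y, 'a) lasso_aut \<Rightarrow> 'x \<Rightarrow> 'a list \<times> 'a list \<Rightarrow> 'y" where
  "delta A x p = dcirc A (d1w A x (fst p)) (snd p)"

definition reachable :: "('x, 'y, 'a) lasso_aut \<Rightarrow> bool" where
  "reachable A \<longleftrightarrow> is_lasso_aut A \<and>
     (\<forall>x\<in>X1 A. \<exists>w. x = d1w A (init A) w) \<and>
     (\<forall>y\<in>X2 A. \<exists>p. lasso p \<and> y = delta A (init A) p)"

definition lasso_morphism ::
  "('x, 'y, 'a) lasso_aut \<Rightarrow> ('x2, 'y2, 'a) lasso_aut \<Rightarrow> ('x \<Rightarrow> 'x2) \<Rightarrow> ('y \<Rightarrow> 'y2) \<Rightarrow> bool" where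
  "lasso_morphism A B h1 h2 \<longleftrightarrow>
     h1 ` X1 A \<subseteq> X1 B \<and> h2 ` X2 A \<subseteq> X2 B \<and> h1 (init A) = init B \<and>
     (\<forall>x\<in>X1 A. \<forall>a. h1 (d1 A x a) = d1 B (h1 x) a) \<and>
     (\<forall>x\<in>X1 A. \<forall>a. h2 (d2 A x a) = d2 B (h1 x) a) \<and>
     (\<forall>y\<in>X2 A. \<forall>a. h2 (d3 A y a) = d3 B (h2 y) a)"

definition admissible :: "('x, 'y, 'a) lasso_aut \<Rightarrow> 'y set \<Rightarrow> bool" where
  "admissible A c \<longleftrightarrow> c \<subseteq> X2 A \<and>
     (\<forall>p q. lasso p \<and> lasso q \<and> sim_gamma p q \<longrightarrow>
        (delta A (init A) p \<in> c \<longleftrightarrow> delta A (init A) q \<in> c))"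

definition Adm :: "('x, 'y, 'a) lasso_aut \<Rightarrow> 'y set set" where
  "Adm A = {c. admissible A c}"

definition sim_delta :: "('x, 'y, 'a) lasso_aut \<Rightarrow> ('a list \<times> 'a list) set" where
  "sim_delta A = {(u, v). u \<noteq> [] \<and> v \<noteq> [] \<and>
     (\<forall>x\<in>X1 A. d1w A x u = d1w A x v \<and> dcirc A x u = dcirc A x v) \<and>
     (\<forall>y\<in>X2 A. d3w A y u = d3w A y v)}"

definition sim_lasso :: "('x, 'y, 'a) lasso_aut \<Rightarrow> 'a list \<times> 'a list \<Rightarrow> 'a list \<times> 'a list \<Rightarrow> bool" where
  "sim_lasso A p q \<longleftrightarrow>
     (\<forall>x\<in>X1 A. \<forall>c\<in>Adm A. delta A x p \<in> c \<longleftrightarrow> delta A x q \<in> c)"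

definition sim_up :: "('x, 'y, 'a) lasso_aut \<Rightarrow> ((nat \<Rightarrow> 'a) \<times> (nat \<Rightarrow> 'a)) set" where
  "sim_up A = {(omega_of p, omega_of q) | p q. lasso p \<and> lasso q \<and> sim_lasso A p q}"

definition sim_well_defined :: "('x, 'y, 'a) lasso_aut \<Rightarrow> bool" where
  "sim_well_defined A \<longleftrightarrow>
     (\<forall>p p' q q'. lasso p \<and> lasso p' \<and> lasso q \<and> lasso q' \<and>
        sim_gamma p p' \<and> sim_gamma q q' \<longrightarrow> (sim_lasso A p q \<longleftrightarrow> sim_lasso A p' q'))"

end

theory Submission
  imports Defs
begin

text \<open>
  Reachability is what makes the construction work. Admissibility of a set c of states only
  constrains runs from the initial state, but every state of \<open>X\<^sub>1\<close> has the form
  \<open>\<delta>\<^sub>1(x\<^sub>0, w)\<close> and \<open>\<delta>(\<delta>\<^sub>1(x\<^sub>0, w), (u, v)) = \<delta>(x\<^sub>0, (wu, v))\<close>, where \<open>wuv\<^sup>\<omega>\<close> depends only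
  on \<open>uv\<^sup>\<omega>\<close>; so the defining condition of \<open>\<sim>\<close> is invariant under \<open>\<sim>\<^sub>\<gamma>\<close>.
  Compatibility with the Wilke operations follows because \<open>\<sim>\<^sub>\<delta>\<close>-equivalent words act
  identically on states. For a morphism \<open>X \<rightarrow> Y\<close> into a reachable \<open>Y\<close>, both state maps are
  surjective, so equalities of transitions in \<open>X\<close> are transported to \<open>Y\<close>, and an admissible
  set of \<open>Y\<close> pulls back along \<open>h\<^sub>2\<close> to an admissible set of \<open>X\<close>.
\<close>

lemma mixed_prod_omega_of: "mixed_prod u (omega_of p) = omega_of (u @ fst p, snd p)"
  unfolding mixed_prod_def omega_of_def
  by (rule ext) (auto simp: nth_append)

lemma sim_gamma_prefix:
  "sim_gamma p q \<Longrightarrow> sim_gamma (w @ fst p, snd p) (w @ fst q, snd q)"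
  unfolding sim_gamma_def by (metis mixed_prod_omega_of)

lemma d1w_append: "d1w A x (u @ v) = d1w A (d1w A x u) v"
  by (simp add: d1w_def)

lemma d3w_append: "d3w A y (u @ v) = d3w A (d3w A y u) v"
  by (simp add: d3w_def)

lemma dcirc_append: "u \<noteq> [] \<Longrightarrow> dcirc A x (u @ v) = d3w A (dcirc A x u) v"
  by (cases u) (simp_all add: dcirc_def d3w_append)

lemma delta_d1w: "delta A (d1w A x w) p = delta A x (w @ fst p, snd p)"
  by (simp add: delta_def d1w_append)

lemma d1w_closed: "is_lasso_aut A \<Longrightarrow> x \<in> X1 A \<Longrightarrow> d1w A x u \<in> X1 A"
  unfolding d1w_def is_lasso_aut_def
  by (induction u arbitrary: x) auto

lemma d3w_closed: "is_lasso_aut A \<Longrightarrow> y \<in> X2 A \<Longrightarrow> d3w A y u \<in> X2 A"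
  unfolding d3w_def is_lasso_aut_def
  by (induction u arbitrary: y) auto

lemma dcirc_closed: "is_lasso_aut A \<Longrightarrow> x \<in> X1 A \<Longrightarrow> dcirc A x u \<in> X2 A"
  unfolding dcirc_def by (rule d3w_closed) (auto simp: is_lasso_aut_def)

lemma delta_closed: "is_lasso_aut A \<Longrightarrow> x \<in> X1 A \<Longrightarrow> delta A x p \<in> X2 A"
  unfolding delta_def by (intro dcirc_closed d1w_closed)

context
  fixes A :: "('x, 'y, 'a) lasso_aut" and B :: "('x2, 'y2, 'a) lasso_aut" and h1 h2
  assumes morph: "lasso_morphism A B h1 h2" and aut: "is_lasso_aut A"
begin

lemma lasso_morphism_d1w: "x \<in> X1 A \<Longrightarrow> h1 (d1w A x u) = d1w B (h1 x) u"
proof (induction u arbitrary: x)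
  case (Cons a u)
  then have "d1 A x a \<in> X1 A" "h1 (d1 A x a) = d1 B (h1 x) a"
    using aut morph by (auto simp: is_lasso_aut_def lasso_morphism_def)
  with Cons.IH show ?case by (simp add: d1w_def)
qed (simp add: d1w_def)

lemma lasso_morphism_d3w: "y \<in> X2 A \<Longrightarrow> h2 (d3w A y u) = d3w B (h2 y) u"
proof (induction u arbitrary: y)
  case (Cons a u)
  then have "d3 A y a \<in> X2 A" "h2 (d3 A y a) = d3 B (h2 y) a"
    using aut morph by (auto simp: is_lasso_aut_def lasso_morphism_def)
  with Cons.IH show ?case by (simp add: d3w_def)
qed (simp add: d3w_def)

lemma lasso_morphism_dcirc: "x \<in> X1 A \<Longrightarrow> h2 (dcirc A x u) = dcirc B (h1 x) u"
proof -
  assume x: "x \<in> X1 A"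
  then have "d2 A x (hd u) \<in> X2 A" "h2 (d2 A x (hd u)) = d2 B (h1 x) (hd u)"
    using aut morph by (auto simp: is_lasso_aut_def lasso_morphism_def)
  then show ?thesis by (simp add: dcirc_def lasso_morphism_d3w)
qed

lemma lasso_morphism_delta: "x \<in> X1 A \<Longrightarrow> h2 (delta A x p) = delta B (h1 x) p"
  unfolding delta_def by (simp add: lasso_morphism_dcirc lasso_morphism_d1w d1w_closed aut)

lemma lasso_morphism_delta_init: "h2 (delta A (init A) p) = delta B (init B) p"
  using aut morph by (simp add: lasso_morphism_delta is_lasso_aut_def lasso_morphism_def)

lemma lasso_morphism_X1_onto: "reachable B \<Longrightarrow> h1 ` X1 A = X1 B"
proof
  show "h1 ` X1 A \<subseteq> X1 B" using morph by (simp add: lasso_morphism_def)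
  show "X1 B \<subseteq> h1 ` X1 A" if B: "reachable B"
  proof
    fix x assume "x \<in> X1 B"
    then obtain w where "x = d1w B (init B) w" using B unfolding reachable_def by blast
    then have "x = h1 (d1w A (init A) w)"
      using aut morph by (simp add: lasso_morphism_d1w is_lasso_aut_def lasso_morphism_def)
    then show "x \<in> h1 ` X1 A" using aut by (simp add: d1w_closed is_lasso_aut_def)
  qed
qed

lemma lasso_morphism_X2_onto: "reachable B \<Longrightarrow> h2 ` X2 A = X2 B"
proof
  show "h2 ` X2 A \<subseteq> X2 B" using morph by (simp add: lasso_morphism_def)
  show "X2 B \<subseteq> h2 ` X2 A" if B: "reachable B"
  proof
    fix y assume "y \<in> X2 B"
    then obtain p where "y = delta B (init B) p" using B unfolding reachable_def by blast
    then have "y = h2 (delta A (init A) p)" by (simp add: lasso_morphism_delta_init)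
    then show "y \<in> h2 ` X2 A" using aut by (simp add: delta_closed is_lasso_aut_def)
  qed
qed

lemma admissible_vimage: "c \<in> Adm B \<Longrightarrow> {y \<in> X2 A. h2 y \<in> c} \<in> Adm A"
  unfolding Adm_def admissible_def
  using aut by (auto simp: lasso_morphism_delta_init[symmetric] delta_closed is_lasso_aut_def)

end

lemma admissible_delta_sim_gamma:
  assumes A: "reachable A" and pq: "lasso p" "lasso q" "sim_gamma p q"
    and x: "x \<in> X1 A" and c: "c \<in> Adm A"
  shows "delta A x p \<in> c \<longleftrightarrow> delta A x q \<in> c"
proof -
  obtain w where w: "x = d1w A (init A) w" using A x unfolding reachable_def by blast
  have "lasso (w @ fst p, snd p)" "lasso (w @ fst q, snd q)"
    using pq by (auto simp: lasso_def)
  moreover have "sim_gamma (w @ fst p, snd p) (w @ fst q, snd q)"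
    using pq(3) by (rule sim_gamma_prefix)
  ultimately have "delta A (init A) (w @ fst p, snd p) \<in> c \<longleftrightarrow> delta A (init A) (w @ fst q, snd q) \<in> c"
    using c unfolding Adm_def admissible_def by blast
  then show ?thesis unfolding w delta_d1w .
qed

lemma sim_well_defined_reachable: "reachable A \<Longrightarrow> sim_well_defined A"
  unfolding sim_well_defined_def sim_lasso_def
  using admissible_delta_sim_gamma by (metis (no_types))

lemma sim_up_omega_of_iff:
  assumes "reachable A" "lasso p" "lasso q"
  shows "(omega_of p, omega_of q) \<in> sim_up A \<longleftrightarrow> sim_lasso A p q"
proof
  assume "(omega_of p, omega_of q) \<in> sim_up A"
  then obtain p' q' where "omega_of p = omega_of p'" "omega_of q = omega_of q'"
    "lasso p'" "lasso q'" "sim_lasso A p' q'"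
    unfolding sim_up_def by blast
  with assms show "sim_lasso A p q"
    using sim_well_defined_reachable[of A]
    unfolding sim_well_defined_def sim_gamma_def by metis
qed (use assms in \<open>unfold sim_up_def, blast\<close>)

lemma equiv_sim_up:
  fixes A :: "('x, 'y, 'a) lasso_aut"
  assumes A: "reachable A"
  shows "equiv up_words (sim_up A)"
proof (rule equivI)
  show "sim_up A \<subseteq> up_words \<times> up_words"
    unfolding sim_up_def up_words_def by blast
  show "refl_on up_words (sim_up A)"
  proof (rule refl_onI)
    fix \<alpha> :: "nat \<Rightarrow> 'a" assume "\<alpha> \<in> up_words"
    then obtain p where "\<alpha> = omega_of p" "lasso p" unfolding up_words_def by blast
    with A show "(\<alpha>, \<alpha>) \<in> sim_up A" by (simp add: sim_up_omega_of_iff sim_lasso_def)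
  qed
  show "sym (sim_up A)"
  proof (rule symI)
    fix \<alpha> \<beta> assume "(\<alpha>, \<beta>) \<in> sim_up A"
    then obtain p q where "\<alpha> = omega_of p" "\<beta> = omega_of q" "lasso p" "lasso q" "sim_lasso A p q"
      unfolding sim_up_def by blast
    then show "(\<beta>, \<alpha>) \<in> sim_up A" unfolding sim_up_def sim_lasso_def by blast
  qed
  show "trans (sim_up A)"
  proof (rule transI)
    fix \<alpha> \<beta> \<gamma> assume "(\<alpha>, \<beta>) \<in> sim_up A" "(\<beta>, \<gamma>) \<in> sim_up A"
    then obtain p q q' r where "\<alpha> = omega_of p" "\<beta> = omega_of q" "\<beta> = omega_of q'"
      "\<gamma> = omega_of r" "lasso p" "lasso q" "lasso q'" "lasso r"
      "sim_lasso A p q" "sim_lasso A q' r"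
      unfolding sim_up_def by blast
    have "sim_lasso A q r"
      using \<open>(\<beta>, \<gamma>) \<in> sim_up A\<close> sim_up_omega_of_iff[OF A \<open>lasso q\<close> \<open>lasso r\<close>]
      unfolding \<open>\<beta> = omega_of q\<close> \<open>\<gamma> = omega_of r\<close> by blast
    with \<open>sim_lasso A p q\<close> have "sim_lasso A p r" unfolding sim_lasso_def by blast
    with \<open>lasso p\<close> \<open>lasso r\<close> show "(\<alpha>, \<gamma>) \<in> sim_up A"
      unfolding \<open>\<alpha> = omega_of p\<close> \<open>\<gamma> = omega_of r\<close> sim_up_def by blast
  qed
qed

lemma equiv_sim_delta: "equiv nonempty_words (sim_delta A)"
  by (rule equivI) (auto simp: refl_on_def sym_def trans_def sim_delta_def nonempty_words_def)

lemma sim_delta_append: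
  assumes "is_lasso_aut A" "(u, u') \<in> sim_delta A" "(v, v') \<in> sim_delta A"
  shows "(u @ v, u' @ v') \<in> sim_delta A"
  using assms
  by (auto simp: sim_delta_def d1w_append d3w_append dcirc_append d1w_closed d3w_closed dcirc_closed)

lemma sim_up_mixed_prod:
  assumes A: "reachable A" and u: "(u, u') \<in> sim_delta A" and \<alpha>: "(\<alpha>, \<alpha>') \<in> sim_up A"
  shows "(mixed_prod u \<alpha>, mixed_prod u' \<alpha>') \<in> sim_up A"
proof -
  obtain p q where pq: "\<alpha> = omega_of p" "\<alpha>' = omega_of q" "lasso p" "lasso q" "sim_lasso A p q"
    using \<alpha> unfolding sim_up_def by blast
  have "is_lasso_aut A" using A by (simp add: reachable_def)
  then have "sim_lasso A (u @ fst p, snd p) (u' @ fst q, snd q)"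
    using u pq(5) unfolding sim_lasso_def sim_delta_def
    by (simp add: delta_d1w[symmetric] d1w_closed)
  moreover have "lasso (u @ fst p, snd p)" "lasso (u' @ fst q, snd q)"
    using pq by (auto simp: lasso_def)
  ultimately show ?thesis unfolding sim_up_def pq mixed_prod_omega_of by blast
qed

lemma sim_up_omega_pow:
  assumes "(u, u') \<in> sim_delta A"
  shows "(omega_pow u, omega_pow u') \<in> sim_up A"
proof -
  have "sim_lasso A ([], u) ([], u')" "lasso ([], u)" "lasso ([], u')"
    using assms by (auto simp: sim_delta_def sim_lasso_def delta_def d1w_def lasso_def)
  then show ?thesis unfolding sim_up_def omega_pow_def by blast
qed

lemma wilke_congruence_sim: "reachable A \<Longrightarrow> wilke_congruence (sim_delta A) (sim_up A)"
  unfolding wilke_congruence_def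
  by (intro conjI allI impI equiv_sim_delta equiv_sim_up sim_up_omega_pow)
    (auto intro: sim_delta_append sim_up_mixed_prod simp: reachable_def)

lemma sim_delta_mono:
  assumes m: "lasso_morphism A B h1 h2" and A: "is_lasso_aut A" and B: "reachable B"
  shows "sim_delta A \<subseteq> sim_delta B"
proof (clarify)
  fix u v assume "(u, v) \<in> sim_delta A"
  then have ne: "u \<noteq> []" "v \<noteq> []"
    and X1: "\<forall>x\<in>X1 A. d1w A x u = d1w A x v \<and> dcirc A x u = dcirc A x v"
    and X2: "\<forall>y\<in>X2 A. d3w A y u = d3w A y v"
    unfolding sim_delta_def by auto
  have "d1w B x u = d1w B x v \<and> dcirc B x u = dcirc B x v" if x: "x \<in> X1 B" for x
  proof -
    obtain x' where "x' \<in> X1 A" "x = h1 x'"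
      using x lasso_morphism_X1_onto[OF m A B] by blast
    with X1 show ?thesis
      by (metis lasso_morphism_d1w[OF m A] lasso_morphism_dcirc[OF m A])
  qed
  moreover have "d3w B y u = d3w B y v" if y: "y \<in> X2 B" for y
  proof -
    obtain y' where "y' \<in> X2 A" "y = h2 y'"
      using y lasso_morphism_X2_onto[OF m A B] by blast
    with X2 show ?thesis
      by (metis lasso_morphism_d3w[OF m A])
  qed
  ultimately show "(u, v) \<in> sim_delta B"
    using ne unfolding sim_delta_def by simp
qed

lemma sim_lasso_mono:
  assumes m: "lasso_morphism A B h1 h2" and A: "is_lasso_aut A" and B: "reachable B"
    and pq: "sim_lasso A p q"
  shows "sim_lasso B p q"
  unfolding sim_lasso_def
proof (intro ballI)
  fix x c assume x: "x \<in> X1 B" and c: "c \<in> Adm B"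
  obtain x' where x': "x' \<in> X1 A" "x = h1 x'"
    using x lasso_morphism_X1_onto[OF m A B] by blast
  define c' where "c' = {y \<in> X2 A. h2 y \<in> c}"
  have "c' \<in> Adm A" unfolding c'_def by (rule admissible_vimage[OF m A c])
  with pq x'(1) have "delta A x' p \<in> c' \<longleftrightarrow> delta A x' q \<in> c'"
    unfolding sim_lasso_def by blast
  then show "delta B x p \<in> c \<longleftrightarrow> delta B x q \<in> c"
    unfolding x'(2) lasso_morphism_delta[OF m A x'(1), symmetric] c'_def
    by (simp add: delta_closed[OF A x'(1)])
qed

lemma sim_up_mono:
  assumes "lasso_morphism A B h1 h2" "is_lasso_aut A" "reachable B"
  shows "sim_up A \<subseteq> sim_up B"
  unfolding sim_up_def using sim_lasso_mono[OF assms] by fast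

theorem mainTheorem16:
  fixes X :: "('x, 'y, 'a::finite) lasso_aut"
  assumes "reachable X"
  shows "sim_well_defined X \<and> equiv up_words (sim_up X) \<and>
         wilke_congruence (sim_delta X) (sim_up X) \<and>
         (\<forall>(Y :: ('x2, 'y2, 'a) lasso_aut) h1 h2. reachable Y \<and> lasso_morphism X Y h1 h2 \<longrightarrow>
            sim_delta X \<subseteq> sim_delta Y \<and> sim_up X \<subseteq> sim_up Y)"
proof (intro conjI allI impI)
  have X: "is_lasso_aut X" using assms by (simp add: reachable_def)
  show "sim_well_defined X" using assms by (rule sim_well_defined_reachable)
  show "equiv up_words (sim_up X)" using assms by (rule equiv_sim_up)
  show "wilke_congruence (sim_delta X) (sim_up X)" using assms by (rule wilke_congruence_sim)
  fix Y :: "('x2, 'y2, 'a) lasso_aut" and h1 h2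
  assume "reachable Y \<and> lasso_morphism X Y h1 h2"
  then show "sim_delta X \<subseteq> sim_delta Y" "sim_up X \<subseteq> sim_up Y"
    using sim_delta_mono sim_up_mono X by blast+
qed

end
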